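(* Consider the setting in which a division may give each player an arbitrary piece that is a finite union of intervals (pieces need not be connected). In this setting, for every instance (any number $n$ of players with any nonatomic valuations) and every $\alpha>1$, the instance does not exhibit an $\alpha$-dumping paradox with respect to the utilitarian welfare, nor with respect to the egalitarian welfare. Moreover, there is no envy-free partial division that Pareto dominates every envy-free complete division.
   Context: A cake is the interval $[0,1]$. There are $n$ players $1,\dots,n$; each player $i$ has a valuation $v_i$, a nonatomic countably additive probability measure on the Borel subsets of $[0,1]$ (so $v_i([0,1])=1$). In this statement a division $x$ is a sequence $(X_1,\dots,X_n)$ of pairwise disjoint sets, each a finite union of intervals of $[0,1]$, with $X_i$ the piece of player $i$; it is complete if $X_1\cup\dots\cup X_n$ covers $[0,1]$ up to finitely many points, and partial otherwise. Write $u_i(x,j)=v_i(X_j)$. The division $x$ is envy-free if $u_i(x,i)\ge u_i(x,j)$ for all $i,j$. The utilitarian welfare is $u(x)=\sum_{i=1}^n u_i(x,i)$ and the egalitarian welfare is $eg(x)=\min_i u_i(x,i)$. For a welfare function $w$ and $\alpha>1$, an instance exhibits an $\alpha$-dumping paradox with respect to $w$ if there is an envy-free partial division $y$ such that $w(y)\ge\alpha\, w(x)$ for every envy-free complete division $x$. A division $y$ Pareto dominates $x$ if $u_i(y,i)\ge u_i(x,i)$ for all $i$ with at least one strict inequality. *)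

theory Defs
  imports "HOL-Probability.Probability"
begin

text \<open>Players are 1..n; a valuation of player i is v i, a probability measure on the
Borel sets of the cake [0,1].\<close>

definition nonatomic :: "'a measure \<Rightarrow> bool" where
  "nonatomic M \<longleftrightarrow> (\<forall>A\<in>sets M. measure M A > 0 \<longrightarrow>
      (\<exists>B\<in>sets M. B \<subseteq> A \<and> 0 < measure M B \<and> measure M B < measure M A))"

definition valuation :: "real measure \<Rightarrow> bool" where
  "valuation M \<longleftrightarrow> prob_space M \<and> space M = {0..1}
     \<and> sets M = sets (restrict_space borel {0..1}) \<and> nonatomic M"

definition finite_union_intervals :: "real set \<Rightarrow> bool" where
  "finite_union_intervals X \<longleftrightarrow> X \<subseteq> {0..1} \<and>
     (\<exists>F. finite F \<and> (\<forall>I\<in>F. is_interval I) \<and> X = \<Union>F)"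

definition division :: "nat \<Rightarrow> (nat \<Rightarrow> real set) \<Rightarrow> bool" where
  "division n X \<longleftrightarrow> (\<forall>i\<in>{1..n}. finite_union_intervals (X i)) \<and>
     (\<forall>i\<in>{1..n}. \<forall>j\<in>{1..n}. i \<noteq> j \<longrightarrow> X i \<inter> X j = {})"

definition complete_div :: "nat \<Rightarrow> (nat \<Rightarrow> real set) \<Rightarrow> bool" where
  "complete_div n X \<longleftrightarrow> division n X \<and> finite ({0..1} - (\<Union>i\<in>{1..n}. X i))"

definition partial_div :: "nat \<Rightarrow> (nat \<Rightarrow> real set) \<Rightarrow> bool" where
  "partial_div n X \<longleftrightarrow> division n X \<and> \<not> finite ({0..1} - (\<Union>i\<in>{1..n}. X i))"

definition util :: "(nat \<Rightarrow> real measure) \<Rightarrow> (nat \<Rightarrow> real set) \<Rightarrow> nat \<Rightarrow> nat \<Rightarrow> real" where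
  "util v X i j = measure (v i) (X j)"

definition envy_free :: "nat \<Rightarrow> (nat \<Rightarrow> real measure) \<Rightarrow> (nat \<Rightarrow> real set) \<Rightarrow> bool" where
  "envy_free n v X \<longleftrightarrow> (\<forall>i\<in>{1..n}. \<forall>j\<in>{1..n}. util v X i i \<ge> util v X i j)"

definition utilitarian :: "nat \<Rightarrow> (nat \<Rightarrow> real measure) \<Rightarrow> (nat \<Rightarrow> real set) \<Rightarrow> real" where
  "utilitarian n v X = (\<Sum>i\<in>{1..n}. util v X i i)"

definition egalitarian :: "nat \<Rightarrow> (nat \<Rightarrow> real measure) \<Rightarrow> (nat \<Rightarrow> real set) \<Rightarrow> real" where
  "egalitarian n v X = Min ((\<lambda>i. util v X i i) ` {1..n})"

definition dumping_paradox ::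
  "nat \<Rightarrow> (nat \<Rightarrow> real measure) \<Rightarrow> (nat \<Rightarrow> (nat \<Rightarrow> real measure) \<Rightarrow> (nat \<Rightarrow> real set) \<Rightarrow> real)
     \<Rightarrow> real \<Rightarrow> bool" where
  "dumping_paradox n v w \<alpha> \<longleftrightarrow> (\<exists>Y. partial_div n Y \<and> envy_free n v Y \<and>
     (\<forall>X. complete_div n X \<and> envy_free n v X \<longrightarrow> w n v Y \<ge> \<alpha> * w n v X))"

definition pareto_dominates :: "nat \<Rightarrow> (nat \<Rightarrow> real measure) \<Rightarrow> (nat \<Rightarrow> real set) \<Rightarrow> (nat \<Rightarrow> real set) \<Rightarrow> bool" where
  "pareto_dominates n v Y X \<longleftrightarrow> (\<forall>i\<in>{1..n}. util v Y i i \<ge> util v X i i) \<and>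
     (\<exists>i\<in>{1..n}. util v Y i i > util v X i i)"

end

theory Submission
  imports Defs
begin

text \<open>Every envy-free partial division Y can be completed: the uncovered part R of the cake can be
  divided among the players in an envy-free way (for the valuations restricted to R), and adding
  these new parts to the old pieces yields an envy-free complete division X in which every player
  is at least as well off as in Y. Envy-free complete divisions are proportional, so both welfare
  functions are positive on X; together with w Y \<le> w X this rules out w Y \<ge> \<alpha> * w X for
  \<alpha> > 1, and it also shows that Y cannot Pareto dominate X.

  The envy-free division of R comes from cutting [0,1] into n cells, by the fixed point argument
  for envy-free cake cutting.\<close>

definition cube :: "nat \<Rightarrow> (nat \<Rightarrow> real) set" where
  "cube N = {x. (\<forall>i<N. 0 \<le> x i \<and> x i \<le> 1) \<and> (\<forall>i\<ge>N. x i = 0)}"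

text \<open>The cube is a product of compact intervals and points, hence compact.\<close>

lemma cube_PiE: "cube N = PiE UNIV (\<lambda>i. if i < N then {0..1} else {0})"
proof (intro set_eqI iffI)
  fix x assume "x \<in> cube N"
  then show "x \<in> PiE UNIV (\<lambda>i. if i < N then {0..1} else {0})"
    unfolding cube_def by (auto simp: PiE_iff)
next
  fix x assume "x \<in> PiE UNIV (\<lambda>i. if i < N then {0..1::real} else {0})"
  then have "\<And>i. x i \<in> (if i < N then {0..1} else {0})" by (auto simp: PiE_iff)
  then have "(\<forall>i<N. 0 \<le> x i \<and> x i \<le> 1) \<and> (\<forall>i\<ge>N. x i = 0)"
    by (metis atLeastAtMost_iff not_le singletonD)
  then show "x \<in> cube N" unfolding cube_def by simp
qed

lemma compact_cube: "compact (cube N)"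
proof -
  have "compactin (product_topology (\<lambda>i. euclidean) UNIV)
          (PiE UNIV (\<lambda>i. if i < N then {0..1::real} else {0}))"
    by (subst compactin_PiE) (auto simp: compactin_euclidean_iff)
  then show ?thesis
    by (simp add: cube_PiE euclidean_product_topology compactin_euclidean_iff)
qed

lemma cube_nonempty: "cube N \<noteq> {}"
proof -
  have "(\<lambda>_. 0) \<in> cube N" unfolding cube_def by simp
  then show ?thesis by blast
qed

lemma dist_fun_le:
  fixes x y :: "nat \<Rightarrow> real"
  assumes "\<And>i. \<bar>x i - y i\<bar> \<le> d"
  shows "dist x y \<le> 2 * d"
proof -
  have geom: "summable (\<lambda>k. (1/2::real)^k)" by (simp add: summable_geometric_iff)
  have "dist x y = (\<Sum>k. (1/2)^k * min (dist (x (from_nat k)) (y (from_nat k))) 1)"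
    unfolding dist_fun_def by simp
  also have "\<dots> \<le> (\<Sum>k. (1/2::real)^k * d)"
  proof (rule suminf_le)
    show "(1/2)^k * min (dist (x (from_nat k)) (y (from_nat k))) 1 \<le> (1/2::real)^k * d" for k
      using assms[of "from_nat k"] by (intro mult_left_mono) (auto simp: dist_real_def)
    show "summable (\<lambda>k. (1/2::real)^k * d)" using geom by (rule summable_mult2)
    show "summable (\<lambda>k. (1/2::real)^k * min (dist (x (from_nat k)) (y (from_nat k))) 1)"
      by (rule summable_comparison_test'[OF geom]) auto
  qed
  also have "\<dots> = 2 * d"
    using suminf_geometric[of "1/2::real"] by (simp add: suminf_mult2[symmetric])
  finally show ?thesis .
qed

lemma cube_uniform_modulus:
  fixes f :: "(nat \<Rightarrow> real) \<Rightarrow> nat \<Rightarrow> real"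
  assumes cont: "continuous_on (cube N) f" and "0 < \<eta>"
  obtains \<delta> where "0 < \<delta>"
    "\<And>x y i. x \<in> cube N \<Longrightarrow> y \<in> cube N \<Longrightarrow> dist x y < \<delta> \<Longrightarrow> i < N \<Longrightarrow> \<bar>f x i - f y i\<bar> < \<eta>"
proof -
  have "\<forall>i. \<exists>\<delta>>0. \<forall>x\<in>cube N. \<forall>y\<in>cube N. dist y x < \<delta> \<longrightarrow> dist (f y i) (f x i) < \<eta>"
    using compact_uniformly_continuous[OF continuous_on_product_then_coordinatewise[OF cont] compact_cube]
      \<open>0 < \<eta>\<close> unfolding uniformly_continuous_on_def by blast
  then obtain \<Delta> where
    "\<forall>i. 0 < \<Delta> i \<and> (\<forall>x\<in>cube N. \<forall>y\<in>cube N. dist y x < \<Delta> i \<longrightarrow> dist (f y i) (f x i) < \<eta>)"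
    by (auto simp only: choice_iff)
  then have \<Delta>: "\<And>i. 0 < \<Delta> i"
    "\<And>i x y. x \<in> cube N \<Longrightarrow> y \<in> cube N \<Longrightarrow> dist y x < \<Delta> i \<Longrightarrow> dist (f y i) (f x i) < \<eta>"
    by blast+
  show thesis
  proof
    show "0 < Min (insert 1 (\<Delta> ` {..<N}))" using \<Delta>(1) by auto
  next
    fix x y i assume xy: "x \<in> cube N" "y \<in> cube N" "dist x y < Min (insert 1 (\<Delta> ` {..<N}))"
      and "i < N"
    then have "dist x y < \<Delta> i" by auto
    then show "\<bar>f x i - f y i\<bar> < \<eta>"
      using \<Delta>(2)[OF xy(2,1)] by (simp add: dist_real_def dist_commute)
  qed
qed

definition grid_point :: "nat \<Rightarrow> nat \<Rightarrow> (nat \<Rightarrow> nat) \<Rightarrow> nat \<Rightarrow> real" where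
  "grid_point N p q = (\<lambda>j. if j < N then real (q j) / real p else 0)"

lemma grid_point_cube: "0 < p \<Longrightarrow> (\<And>j. j < N \<Longrightarrow> q j \<le> p) \<Longrightarrow> grid_point N p q \<in> cube N"
  unfolding cube_def grid_point_def by auto

lemma grid_point_close:
  assumes "0 < p" and cell: "\<And>j. j < N \<Longrightarrow> q j \<le> r j \<and> r j \<le> q j + 1"
  shows "\<bar>grid_point N p r j - grid_point N p q j\<bar> \<le> 1 / real p"
proof (cases "j < N")
  case True
  have "\<bar>real (r j) / real p - real (q j) / real p\<bar> = \<bar>real (r j) - real (q j)\<bar> / real p"
    by (simp add: diff_divide_distrib[symmetric])
  also have "\<dots> \<le> 1 / real p"
    using cell[OF True] \<open>0 < p\<close> by (intro divide_right_mono) auto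
  finally show ?thesis using True unfolding grid_point_def by simp
qed (use \<open>0 < p\<close> in \<open>simp add: grid_point_def\<close>)

text \<open>Kuhn's combinatorial lemma (a cubical Sperner lemma), applied to the labelling that records
  whether a self-map of the cube moves a coordinate up or down, yields a grid cell in which, for
  every coordinate, both directions occur.\<close>

lemma kuhn_cell:
  fixes f :: "(nat \<Rightarrow> real) \<Rightarrow> nat \<Rightarrow> real"
  assumes maps: "\<And>x. x \<in> cube N \<Longrightarrow> f x \<in> cube N" and "0 < p"
  obtains q where "\<And>i. i < N \<Longrightarrow> q i < p"
    "\<And>i. i < N \<Longrightarrow> \<exists>r s. (\<forall>j<N. q j \<le> r j \<and> r j \<le> q j + 1) \<and> (\<forall>j<N. q j \<le> s j \<and> s j \<le> q j + 1)
        \<and> grid_point N p r i \<le> f (grid_point N p r) i \<and> f (grid_point N p s) i \<le> grid_point N p s i"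
proof -
  define lab where "lab y i =
      (if y i = 0 then 0 else if y i = 1 then 1 else if y i \<le> f y i then 0 else (1::nat))"
    for y :: "nat \<Rightarrow> real" and i
  have lab01: "lab y i = 0 \<or> lab y i = 1" for y i unfolding lab_def by auto
  have lab0: "y i \<le> f y i" if "lab y i = 0" "y \<in> cube N" "i < N" for y i
    using that maps[OF that(2)] unfolding lab_def cube_def by (auto split: if_splits)
  have lab1: "f y i \<le> y i" if "lab y i = 1" "y \<in> cube N" "i < N" for y i
    using that maps[OF that(2)] unfolding lab_def cube_def by (auto split: if_splits)
  obtain q where q: "\<forall>i<N. q i < p"
    "\<forall>i<N. \<exists>r s. (\<forall>j<N. q j \<le> r j \<and> r j \<le> q j + 1) \<and> (\<forall>j<N. q j \<le> s j \<and> s j \<le> q j + 1)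
        \<and> lab (grid_point N p r) i \<noteq> lab (grid_point N p s) i"
  proof (rule kuhn_lemma[of p N "\<lambda>x i. lab (grid_point N p x) i"])
    show "\<forall>x. (\<forall>i<N. x i \<le> p) \<longrightarrow> (\<forall>i<N. lab (grid_point N p x) i = 0 \<or> lab (grid_point N p x) i = 1)"
      using lab01 by blast
    show "\<forall>x. (\<forall>i<N. x i \<le> p) \<longrightarrow> (\<forall>i<N. x i = 0 \<longrightarrow> lab (grid_point N p x) i = 0)"
      unfolding lab_def grid_point_def by auto
    show "\<forall>x. (\<forall>i<N. x i \<le> p) \<longrightarrow> (\<forall>i<N. x i = p \<longrightarrow> lab (grid_point N p x) i = 1)"
      unfolding lab_def grid_point_def using \<open>0 < p\<close> by auto
  qed (use \<open>0 < p\<close> in blast)+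
  show thesis
  proof (rule that)
    show "q i < p" if "i < N" for i using q(1) that by blast
  next
    fix i assume i: "i < N"
    obtain r s where cells: "\<forall>j<N. q j \<le> r j \<and> r j \<le> q j + 1" "\<forall>j<N. q j \<le> s j \<and> s j \<le> q j + 1"
      and labels: "lab (grid_point N p r) i \<noteq> lab (grid_point N p s) i"
      using q(2) i by blast
    have in_cube: "grid_point N p r \<in> cube N" "grid_point N p s \<in> cube N"
      using cells q(1) \<open>0 < p\<close> by (auto intro!: grid_point_cube) (metis Suc_leI le_trans)+
    consider "lab (grid_point N p r) i = 0" "lab (grid_point N p s) i = 1"
      | "lab (grid_point N p r) i = 1" "lab (grid_point N p s) i = 0"
      using labels lab01 by metis
    then show "\<exists>r s. (\<forall>j<N. q j \<le> r j \<and> r j \<le> q j + 1) \<and> (\<forall>j<N. q j \<le> s j \<and> s j \<le> q j + 1)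
        \<and> grid_point N p r i \<le> f (grid_point N p r) i \<and> f (grid_point N p s) i \<le> grid_point N p s i"
    proof cases
      case 1 then show ?thesis using cells lab0 lab1 in_cube i by blast
    next
      case 2 then show ?thesis using cells lab0 lab1 in_cube i by blast
    qed
  qed
qed

text \<open>Approximate fixed points: by uniform continuity, the corners of a sufficiently fine Kuhn cell
  force every coordinate of f z - z to be small at the base point z of the cell.\<close>

lemma cube_approx_fixpoint:
  fixes f :: "(nat \<Rightarrow> real) \<Rightarrow> nat \<Rightarrow> real"
  assumes cont: "continuous_on (cube N) f" and maps: "\<And>x. x \<in> cube N \<Longrightarrow> f x \<in> cube N"
    and "0 < \<epsilon>"
  shows "\<exists>z\<in>cube N. \<forall>i<N. \<bar>f z i - z i\<bar> \<le> \<epsilon>"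
proof -
  define \<eta> where "\<eta> = \<epsilon> / 2"
  have \<eta>: "0 < \<eta>" using \<open>0 < \<epsilon>\<close> unfolding \<eta>_def by simp
  obtain \<delta> where \<delta>: "0 < \<delta>"
    "\<And>x y i. x \<in> cube N \<Longrightarrow> y \<in> cube N \<Longrightarrow> dist x y < \<delta> \<Longrightarrow> i < N \<Longrightarrow> \<bar>f x i - f y i\<bar> < \<eta>"
    using cube_uniform_modulus[OF cont \<eta>] by blast
  obtain p :: nat where p: "2 / \<delta> + 1 / \<eta> < real p"
    using reals_Archimedean2 by blast
  have "0 < 2 / \<delta>" "0 < 1 / \<eta>" using \<delta>(1) \<eta> by simp_all
  then have p_pos: "0 < p" and "2 / \<delta> < real p" "1 / \<eta> < real p" using p by linarith+
  then have mesh: "2 / real p < \<delta>" "1 / real p < \<eta>"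
    using \<delta>(1) \<eta> by (simp_all add: divide_less_eq mult.commute)
  obtain q where q: "\<And>i. i < N \<Longrightarrow> q i < p"
    "\<And>i. i < N \<Longrightarrow> \<exists>r s. (\<forall>j<N. q j \<le> r j \<and> r j \<le> q j + 1) \<and> (\<forall>j<N. q j \<le> s j \<and> s j \<le> q j + 1)
        \<and> grid_point N p r i \<le> f (grid_point N p r) i \<and> f (grid_point N p s) i \<le> grid_point N p s i"
    using kuhn_cell[of N f p, OF maps p_pos] by blast
  define z where "z = grid_point N p q"
  have z: "z \<in> cube N" unfolding z_def using q(1) p_pos by (intro grid_point_cube) (auto intro: less_imp_le)
  have near: "\<bar>f z i - z i\<bar> \<le> \<epsilon>" if i: "i < N" for i
  proof -
    obtain r s where cells: "\<forall>j<N. q j \<le> r j \<and> r j \<le> q j + 1" "\<forall>j<N. q j \<le> s j \<and> s j \<le> q j + 1"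
      and up: "grid_point N p r i \<le> f (grid_point N p r) i"
      and down: "f (grid_point N p s) i \<le> grid_point N p s i"
      using q(2)[OF i] by blast
    have close_r: "\<bar>grid_point N p r j - z j\<bar> \<le> 1 / real p" for j
      unfolding z_def using cells(1) p_pos by (intro grid_point_close) auto
    have close_s: "\<bar>grid_point N p s j - z j\<bar> \<le> 1 / real p" for j
      unfolding z_def using cells(2) p_pos by (intro grid_point_close) auto
    have "grid_point N p r \<in> cube N" "grid_point N p s \<in> cube N"
      using cells q(1) p_pos by (auto intro!: grid_point_cube) (metis Suc_leI le_trans)+
    moreover have "dist (grid_point N p r) z < \<delta>" "dist (grid_point N p s) z < \<delta>"
      using dist_fun_le[of "grid_point N p r" z, OF close_r] dist_fun_le[of "grid_point N p s" z, OF close_s]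
        mesh(1) by simp_all
    ultimately have "\<bar>f (grid_point N p r) i - f z i\<bar> < \<eta>" "\<bar>f (grid_point N p s) i - f z i\<bar> < \<eta>"
      using \<delta>(2) z i by blast+
    then have "\<bar>f z i - z i\<bar> \<le> \<eta> + 1 / real p"
      using up down close_r[of i] close_s[of i] unfolding abs_le_iff abs_less_iff by linarith
    then show ?thesis using mesh(2) unfolding \<eta>_def by linarith
  qed
  show ?thesis using z near by blast
qed

text \<open>Brouwer's fixed point theorem for the cube: the continuous function
  g x = \<Sum>i<N. |f x i - x i| attains its minimum on the compact cube, and approximate fixed points
  show that this minimum is 0.\<close>

theorem brouwer_cube:
  fixes f :: "(nat \<Rightarrow> real) \<Rightarrow> nat \<Rightarrow> real"
  assumes cont: "continuous_on (cube N) f" and maps: "\<And>x. x \<in> cube N \<Longrightarrow> f x \<in> cube N"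
  shows "\<exists>x\<in>cube N. f x = x"
proof -
  define g where "g x = (\<Sum>i<N. \<bar>f x i - x i\<bar>)" for x
  have coord: "continuous_on (cube N) (\<lambda>x. x i)" for i :: nat
    by (rule continuous_on_subset[OF continuous_on_product_coordinates]) simp
  have "continuous_on (cube N) g"
    unfolding g_def
    by (intro continuous_on_sum continuous_on_rabs continuous_on_diff coord
        continuous_on_product_then_coordinatewise[OF cont])
  then obtain x where x: "x \<in> cube N" and x_min: "\<And>y. y \<in> cube N \<Longrightarrow> g x \<le> g y"
    using continuous_attains_inf[OF compact_cube cube_nonempty] by blast
  have "g x \<le> 0"
  proof (rule field_le_epsilon)
    fix e :: real assume "0 < e"
    then obtain z where z: "z \<in> cube N" "\<And>i. i < N \<Longrightarrow> \<bar>f z i - z i\<bar> \<le> e / (real N + 1)"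
      using cube_approx_fixpoint[OF cont maps, of "e / (real N + 1)"] by auto
    have "g x \<le> g z" by (rule x_min[OF z(1)])
    also have "\<dots> \<le> real N * (e / (real N + 1))"
      unfolding g_def using sum_mono[of "{..<N}", OF z(2)] by simp
    also have "\<dots> \<le> e"
      using \<open>0 < e\<close> by (simp add: divide_le_eq)
    finally show "g x \<le> 0 + e" by simp
  qed
  moreover have "0 \<le> g x" unfolding g_def by (simp add: sum_nonneg)
  ultimately have "g x = 0" by simp
  then have low: "f x i = x i" if "i < N" for i
    using that sum_nonneg_eq_0_iff[of "{..<N}" "\<lambda>i. \<bar>f x i - x i\<bar>"] unfolding g_def by simp
  have high: "f x i = x i" if "N \<le> i" for i
    using that x maps[OF x] unfolding cube_def by simp
  have "f x = x"
  proof
    fix i show "f x i = x i" using low high by (cases "i < N") auto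
  qed
  then show ?thesis using x by blast
qed

lemma cube_subseq_constant_label:
  fixes X :: "nat \<Rightarrow> nat \<Rightarrow> real" and Q :: "nat \<Rightarrow> 'a"
  assumes X: "\<And>m. X m \<in> cube N" and fin: "finite (range Q)"
  obtains l r where "l \<in> cube N" "strict_mono r" "\<And>j. Q (r j) = Q (r 0)" "(\<lambda>j. X (r j)) \<longlonglongrightarrow> l"
proof -
  obtain m0 where "infinite {m \<in> UNIV. Q m = Q m0}"
    using pigeonhole_infinite[OF infinite_UNIV_nat fin] by blast
  then have inf: "infinite {m. Q m = Q m0}" by simp
  define r1 where "r1 = enumerate {m. Q m = Q m0}"
  have r1: "strict_mono r1" "\<And>j. Q (r1 j) = Q m0"
    unfolding r1_def using strict_mono_enumerate[OF inf] enumerate_in_set[OF inf] by auto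
  obtain l s where ls: "l \<in> cube N" "strict_mono s" "((\<lambda>j. X (r1 j)) \<circ> s) \<longlonglongrightarrow> l"
    using seq_compactE[OF compact_imp_seq_compact[OF compact_cube], of "\<lambda>j. X (r1 j)"] X by metis
  show thesis
  proof
    show "strict_mono (r1 \<circ> s)" using r1(1) ls(2) by (rule strict_mono_o)
    show "Q ((r1 \<circ> s) j) = Q ((r1 \<circ> s) 0)" for j using r1(2) by simp
    show "(\<lambda>j. X ((r1 \<circ> s) j)) \<longlonglongrightarrow> l" using ls(3) by (simp add: o_def)
  qed (rule ls(1))
qed

definition hall_condition :: "'a set \<Rightarrow> ('a \<Rightarrow> 'b set) \<Rightarrow> bool" where
  "hall_condition A E \<longleftrightarrow> (\<forall>a\<in>A. finite (E a)) \<and> (\<forall>S\<subseteq>A. card S \<le> card (\<Union> (E ` S)))"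

definition distinct_reps :: "('a \<Rightarrow> 'b) \<Rightarrow> 'a set \<Rightarrow> ('a \<Rightarrow> 'b set) \<Rightarrow> bool" where
  "distinct_reps f A E \<longleftrightarrow> inj_on f A \<and> (\<forall>a\<in>A. f a \<in> E a)"

lemma hall_condition_subset:
  "hall_condition A E \<Longrightarrow> B \<subseteq> A \<Longrightarrow> hall_condition B E"
  unfolding hall_condition_def by blast

lemma hall_condition_finite_Union:
  "hall_condition A E \<Longrightarrow> finite S \<Longrightarrow> S \<subseteq> A \<Longrightarrow> finite (\<Union> (E ` S))"
  unfolding hall_condition_def by blast

lemma hall_condition_remove:
  assumes fin: "finite A" and hall: "hall_condition A E" and a: "a \<in> A"
    and surplus: "\<And>S. S \<subseteq> A \<Longrightarrow> S \<noteq> {} \<Longrightarrow> S \<noteq> A \<Longrightarrow> card S < card (\<Union> (E ` S))"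
  shows "hall_condition (A - {a}) (\<lambda>x. E x - {b})"
  unfolding hall_condition_def
proof (intro conjI ballI allI impI)
  show "finite (E x - {b})" if "x \<in> A - {a}" for x
    using hall that unfolding hall_condition_def by auto
next
  fix S assume S: "S \<subseteq> A - {a}"
  show "card S \<le> card (\<Union>x\<in>S. E x - {b})"
  proof (cases "S = {}")
    case False
    have "S \<subseteq> A" "S \<noteq> A" using S a by auto
    then have "card S < card (\<Union> (E ` S))" using surplus False by blast
    moreover have "finite (\<Union> (E ` S))"
      using hall_condition_finite_Union[OF hall] fin \<open>S \<subseteq> A\<close> finite_subset by blast
    ultimately have "card S \<le> card (\<Union> (E ` S) - {b})"
      by (cases "b \<in> \<Union> (E ` S)") (auto simp: card_Diff_singleton)
    moreover have "(\<Union>x\<in>S. E x - {b}) = \<Union> (E ` S) - {b}" by auto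
    ultimately show ?thesis by simp
  qed simp
qed

lemma hall_condition_split:
  assumes fin: "finite A" and hall: "hall_condition A E"
    and S: "S \<subseteq> A" and tight: "card (\<Union> (E ` S)) \<le> card S"
  shows "hall_condition (A - S) (\<lambda>x. E x - \<Union> (E ` S))"
  unfolding hall_condition_def
proof (intro conjI ballI allI impI)
  define T where "T = \<Union> (E ` S)"
  have finS: "finite S" using S fin finite_subset by blast
  have cT: "card T = card S"
    using hall S tight unfolding hall_condition_def T_def by (meson dual_order.antisym)
  show "finite (E x - \<Union> (E ` S))" if "x \<in> A - S" for x
    using hall that unfolding hall_condition_def by auto
  fix S' assume S': "S' \<subseteq> A - S"
  have finS': "finite S'" using S' fin finite_subset by blast
  have "card S' + card S = card (S' \<union> S)"
    using S' finS' finS by (subst card_Un_disjoint) auto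
  also have "\<dots> \<le> card (\<Union> (E ` (S' \<union> S)))"
    using hall S' S unfolding hall_condition_def by blast
  also have "\<dots> \<le> card ((\<Union>x\<in>S'. E x - T) \<union> T)"
  proof (rule card_mono)
    have "finite (\<Union> (E ` (S' \<union> S)))"
      using hall_condition_finite_Union[OF hall] finS finS' S S' by blast
    then show "finite ((\<Union>x\<in>S'. E x - T) \<union> T)" unfolding T_def by (rule finite_subset[rotated]) auto
    show "\<Union> (E ` (S' \<union> S)) \<subseteq> (\<Union>x\<in>S'. E x - T) \<union> T" unfolding T_def by auto
  qed
  also have "\<dots> \<le> card (\<Union>x\<in>S'. E x - T) + card T" by (rule card_Un_le)
  finally show "card S' \<le> card (\<Union>x\<in>S'. E x - \<Union> (E ` S))" using cT unfolding T_def by linarith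
qed

lemma distinct_reps_combine:
  assumes f1: "distinct_reps f1 S E" and f2: "distinct_reps f2 (A - S) (\<lambda>x. E x - T)"
    and into: "\<And>x. x \<in> S \<Longrightarrow> f1 x \<in> T"
  shows "distinct_reps (\<lambda>x. if x \<in> S then f1 x else f2 x) A E"
  unfolding distinct_reps_def
proof (intro conjI ballI inj_onI)
  have inj1: "inj_on f1 S" and inj2: "inj_on f2 (A - S)" and out: "\<And>x. x \<in> A - S \<Longrightarrow> f2 x \<notin> T"
    using f1 f2 unfolding distinct_reps_def by auto
  fix x y assume xy: "x \<in> A" "y \<in> A"
    and eq: "(if x \<in> S then f1 x else f2 x) = (if y \<in> S then f1 y else f2 y)"
  show "x = y"
  proof (cases "x \<in> S"; cases "y \<in> S")
    assume "x \<in> S" "y \<in> S" then show ?thesis using eq inj1 by (simp add: inj_on_eq_iff)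
  next
    assume "x \<in> S" "y \<notin> S" then show ?thesis using eq into out xy by force
  next
    assume "x \<notin> S" "y \<in> S" then show ?thesis using eq into out xy by force
  next
    assume "x \<notin> S" "y \<notin> S" then show ?thesis using eq inj2 xy by (simp add: inj_on_eq_iff)
  qed
next
  fix x assume "x \<in> A" then show "(if x \<in> S then f1 x else f2 x) \<in> E x"
    using f1 f2 unfolding distinct_reps_def by auto
qed

text \<open>Hall's theorem, by induction on the size of the family: either some nonempty proper
  subfamily is tight, and one treats it and its complement separately, or every one has a
  surplus, and one element can be assigned arbitrarily.\<close>

theorem hall:
  fixes E :: "'a \<Rightarrow> 'b set"
  assumes "finite A" "hall_condition A E"
  shows "\<exists>f. distinct_reps f A E"
  using assms
proof (induction "card A" arbitrary: A E rule: less_induct)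
  case less
  note fin = less.prems(1) and hall = less.prems(2)
  have IH: "\<exists>f. distinct_reps f A' E'"
    if "finite A'" "card A' < card A" "hall_condition A' (E' :: 'a \<Rightarrow> 'b set)" for A' E'
    using less.hyps that by blast
  show ?case
  proof (cases "\<exists>S. S \<subseteq> A \<and> S \<noteq> {} \<and> S \<noteq> A \<and> card (\<Union> (E ` S)) \<le> card S")
    case True
    then obtain S where S: "S \<subseteq> A" "S \<noteq> {}" "S \<noteq> A" "card (\<Union> (E ` S)) \<le> card S" by blast
    have finS: "finite S" using S(1) fin finite_subset by blast
    have "card S < card A" using S(1,3) fin by (simp add: psubset_card_mono)
    then obtain f1 where f1: "distinct_reps f1 S E"
      using IH[OF finS _ hall_condition_subset[OF hall S(1)]] by blast
    have "0 < card S" using finS S(2) by (simp add: card_gt_0_iff)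
    then have "card (A - S) < card A"
      using card_Diff_subset[OF finS S(1)] card_mono[OF fin S(1)] by linarith
    then obtain f2 where "distinct_reps f2 (A - S) (\<lambda>x. E x - \<Union> (E ` S))"
      using IH hall_condition_split[OF fin hall S(1,4)] fin by blast
    moreover have "f1 x \<in> \<Union> (E ` S)" if "x \<in> S" for x using f1 that unfolding distinct_reps_def by blast
    ultimately show ?thesis using distinct_reps_combine[OF f1] by blast
  next
    case no_tight: False
    show ?thesis
    proof (cases "A = {}")
      case True then show ?thesis unfolding distinct_reps_def by simp
    next
      case False
      then obtain a where a: "a \<in> A" by blast
      have surplus: "card S < card (\<Union> (E ` S))" if "S \<subseteq> A" "S \<noteq> {}" "S \<noteq> A" for S
        using no_tight that by (auto simp: not_le)
      have "card {a} \<le> card (\<Union> (E ` {a}))" using hall a unfolding hall_condition_def by blast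
      then obtain b where b: "b \<in> E a" by fastforce
      obtain f where f: "distinct_reps f (A - {a}) (\<lambda>x. E x - {b})"
        using IH[OF _ card_Diff1_less[OF fin a] hall_condition_remove[OF fin hall a surplus]] fin by blast
      then have "distinct_reps (\<lambda>x. if x \<in> {a} then b else f x) A E"
        using distinct_reps_combine[of "\<lambda>_. b" "{a}" E f A "{b}"] b unfolding distinct_reps_def by auto
      then show ?thesis by blast
    qed
  qed
qed

definition interval_union :: "real set \<Rightarrow> bool" where
  "interval_union S \<longleftrightarrow> (\<exists>F. finite F \<and> (\<forall>I\<in>F. is_interval I) \<and> S = \<Union>F)"

lemma finite_union_intervals_iff:
  "finite_union_intervals X \<longleftrightarrow> X \<subseteq> {0..1} \<and> interval_union X"
  unfolding finite_union_intervals_def interval_union_def by simp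

lemma interval_union_empty: "interval_union {}"
  unfolding interval_union_def by (rule exI[of _ "{}"]) simp

lemma interval_union_interval: "is_interval I \<Longrightarrow> interval_union I"
  unfolding interval_union_def by (rule exI[of _ "{I}"]) simp

lemma interval_union_finite: "finite A \<Longrightarrow> interval_union A"
  unfolding interval_union_def by (rule exI[of _ "(\<lambda>y. {y}) ` A"]) (auto simp: is_interval_1)

lemma interval_union_Un:
  assumes "interval_union A" "interval_union B" shows "interval_union (A \<union> B)"
proof -
  obtain F G where "finite F" "\<forall>I\<in>F. is_interval I" "A = \<Union>F"
    and "finite G" "\<forall>I\<in>G. is_interval I" "B = \<Union>G"
    using assms unfolding interval_union_def by blast
  then show ?thesis unfolding interval_union_def by (intro exI[of _ "F \<union> G"]) auto
qed

lemma interval_union_UN: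
  "finite I \<Longrightarrow> (\<And>i. i \<in> I \<Longrightarrow> interval_union (A i)) \<Longrightarrow> interval_union (\<Union>i\<in>I. A i)"
  by (induction I rule: finite_induct) (simp_all add: interval_union_empty interval_union_Un)

lemma interval_union_Int:
  assumes "interval_union A" "interval_union B" shows "interval_union (A \<inter> B)"
proof -
  obtain F G where F: "finite F" "\<forall>I\<in>F. is_interval I" "A = \<Union>F"
    and G: "finite G" "\<forall>I\<in>G. is_interval I" "B = \<Union>G"
    using assms unfolding interval_union_def by blast
  define H where "H = (\<lambda>(I, J). I \<inter> J) ` (F \<times> G)"
  have "finite H" unfolding H_def using F G by simp
  moreover have "\<forall>K\<in>H. is_interval K" unfolding H_def using F G by (auto intro: is_interval_Int)
  moreover have "A \<inter> B = \<Union>H" unfolding H_def F(3) G(3) by auto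
  ultimately show ?thesis unfolding interval_union_def by blast
qed

text \<open>The part of the cake outside an interval consists of the points below it and the points
  above it, two intervals.\<close>

lemma interval_union_compl_interval:
  assumes "is_interval I" shows "interval_union ({0..1} - I)"
proof -
  let ?below = "{x::real. x \<in> {0..1} \<and> (\<forall>y\<in>I. x < y)}"
  let ?above = "{x::real. x \<in> {0..1} \<and> (\<forall>y\<in>I. y < x)}"
  have "{0..1} - I = ?below \<union> ?above"
  proof (intro set_eqI iffI)
    fix x assume x: "x \<in> {0..1} - I"
    show "x \<in> ?below \<union> ?above"
    proof (rule ccontr)
      assume "x \<notin> ?below \<union> ?above"
      then obtain a b where "a \<in> I" "b \<in> I" "a \<le> x" "x \<le> b" using x by (auto simp: not_less)
      then show False using x assms unfolding is_interval_1 by blast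
    qed
  qed auto
  moreover have "is_interval ?below" "is_interval ?above" unfolding is_interval_1 by auto
  ultimately show ?thesis by (simp add: interval_union_Un interval_union_interval)
qed

lemma interval_union_diff:
  assumes "interval_union A" "interval_union B" "A \<subseteq> {0..1}" shows "interval_union (A - B)"
proof -
  obtain F where F: "finite F" "\<forall>I\<in>F. is_interval I" "B = \<Union>F"
    using assms(2) unfolding interval_union_def by blast
  have "interval_union ({0..1} - \<Union>F)" using F(1,2)
  proof (induction F rule: finite_induct)
    case empty then show ?case by (simp add: interval_union_interval is_interval_cc)
  next
    case (insert I F)
    have "{0..1} - \<Union>(insert I F) = ({0..1} - I) \<inter> ({0..1} - \<Union>F)" by auto
    then show ?case using insert by (simp add: interval_union_Int interval_union_compl_interval)
  qed
  moreover have "A - B = A \<inter> ({0..1} - \<Union>F)" using assms(3) F(3) by auto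
  ultimately show ?thesis using assms(1) by (simp add: interval_union_Int)
qed

lemma interval_union_sets:
  assumes "valuation M" "interval_union S" "S \<subseteq> {0..1}" shows "S \<in> sets M"
proof -
  have "S \<in> sets borel" using assms(2) real_interval_borel_measurable
    unfolding interval_union_def by auto
  then have "S \<in> sets (restrict_space borel {0..1::real})"
    using assms(3) by (subst sets_restrict_space_iff) auto
  then show ?thesis using assms(1) unfolding valuation_def by simp
qed

lemma valuation_prob: "valuation M \<Longrightarrow> prob_space M"
  unfolding valuation_def by simp

lemma valuation_space: "valuation M \<Longrightarrow> space M = {0..1}"
  unfolding valuation_def by simp

text \<open>Nonatomic valuations give no weight to points, hence none to finite sets; this is why a
  division may leave finitely many points uncovered and still count as complete.\<close>

lemma valuation_singleton:
  assumes "valuation M" shows "measure M {x} = 0"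
proof (rule ccontr)
  assume "measure M {x} \<noteq> 0"
  then have "{x} \<in> sets M" using measure_notin_sets[of "{x}" M] by blast
  moreover have "measure M {x} > 0"
    using \<open>measure M {x} \<noteq> 0\<close> measure_nonneg[of M "{x}"] by linarith
  ultimately obtain B where "B \<subseteq> {x}" "0 < measure M B" "measure M B < measure M {x}"
    using assms unfolding valuation_def nonatomic_def by blast
  moreover have "B = {} \<or> B = {x}" using \<open>B \<subseteq> {x}\<close> by blast
  ultimately show False by auto
qed

lemma valuation_finite_null:
  assumes M: "valuation M" and "finite A" shows "measure M A = 0"
proof (cases "A \<subseteq> {0..1}")
  case True
  interpret prob_space M using valuation_prob[OF M] .
  have "measure M A = (\<Sum>x\<in>A. measure M {x})"
    using True \<open>finite A\<close>
    by (intro finite_measure_eq_sum_singleton interval_union_sets[OF M] interval_union_finite) auto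
  then show ?thesis by (simp add: valuation_singleton[OF M])
next
  case False
  then have "A \<notin> sets M" using sets.sets_into_space valuation_space[OF M] by blast
  then show ?thesis by (simp add: measure_notin_sets)
qed

text \<open>These functions drive the division of
  R: the value of R \<inter> {a<..b} is the increment of the distribution function.\<close>

definition residual_measure :: "real measure \<Rightarrow> real set \<Rightarrow> real measure" where
  "residual_measure M R = distr (restrict_space M R) borel (\<lambda>x. x)"

definition residual_cdf :: "real measure \<Rightarrow> real set \<Rightarrow> real \<Rightarrow> real" where
  "residual_cdf M R t = cdf (residual_measure M R) t"

lemma residual_measure_measurable:
  assumes "valuation M" shows "(\<lambda>x. x) \<in> restrict_space M R \<rightarrow>\<^sub>M borel"
proof -
  have "(\<lambda>x::real. x) \<in> restrict_space borel {0..1} \<rightarrow>\<^sub>M borel"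
    by (rule measurable_restrict_space1) simp
  moreover have "M \<rightarrow>\<^sub>M borel = restrict_space borel {0..1} \<rightarrow>\<^sub>M (borel :: real measure)"
    using assms unfolding valuation_def by (intro measurable_cong_sets) simp_all
  ultimately have "(\<lambda>x::real. x) \<in> M \<rightarrow>\<^sub>M borel" by simp
  then show ?thesis by (rule measurable_restrict_space1)
qed

lemma residual_measure_measure:
  assumes "valuation M" "interval_union R" "R \<subseteq> {0..1}" "A \<in> sets borel"
  shows "measure (residual_measure M R) A = measure M (A \<inter> R)"
proof -
  have R: "R \<inter> space M \<in> sets M"
    using interval_union_sets[OF assms(1,2,3)] assms(3) valuation_space[OF assms(1)] by (simp add: Int_absorb2)
  have "measure (residual_measure M R) A = measure (restrict_space M R) (A \<inter> space (restrict_space M R))"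
    unfolding residual_measure_def
    by (simp add: measure_distr[OF residual_measure_measurable[OF assms(1)] assms(4)])
  also have "\<dots> = measure (restrict_space M R) (A \<inter> R)"
    using assms(3) valuation_space[OF assms(1)] by (simp add: space_restrict_space Int_absorb2)
  also have "\<dots> = measure M (A \<inter> R)"
    by (rule measure_restrict_space[OF R]) auto
  finally show ?thesis .
qed

lemma residual_measure_finite_borel:
  assumes "valuation M" "interval_union R" "R \<subseteq> {0..1}"
  shows "finite_borel_measure (residual_measure M R)"
proof (rule finite_borel_measure.intro)
  interpret prob_space M using valuation_prob[OF assms(1)] .
  have "finite_measure (restrict_space M R)"
    using finite_measure_restrict_space[OF finite_measure_axioms interval_union_sets[OF assms(1,2,3)]] .
  then show "finite_measure (residual_measure M R)" unfolding residual_measure_def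
    by (rule finite_measure.finite_measure_distr[OF _ residual_measure_measurable[OF assms(1)]])
  show "finite_borel_measure_axioms (residual_measure M R)"
    by unfold_locales (simp add: residual_measure_def)
qed

lemma residual_cdf_cont:
  assumes "valuation M" "interval_union R" "R \<subseteq> {0..1}"
  shows "isCont (residual_cdf M R) t"
proof -
  interpret finite_borel_measure "residual_measure M R" by (rule residual_measure_finite_borel[OF assms])
  have "measure (residual_measure M R) {t} = measure M ({t} \<inter> R)"
    by (rule residual_measure_measure[OF assms]) simp
  also have "\<dots> = 0" by (rule valuation_finite_null[OF assms(1)]) simp
  finally show ?thesis unfolding residual_cdf_def using isCont_cdf by simp
qed

lemma residual_cdf_diff:
  assumes "valuation M" "interval_union R" "R \<subseteq> {0..1}" "a \<le> b"
  shows "residual_cdf M R b - residual_cdf M R a = measure M (R \<inter> {a<..b})"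
proof (cases "a = b")
  case True then show ?thesis by simp
next
  case False
  interpret finite_borel_measure "residual_measure M R" by (rule residual_measure_finite_borel[OF assms(1-3)])
  have "residual_cdf M R b - residual_cdf M R a = measure (residual_measure M R) {a<..b}"
    unfolding residual_cdf_def using cdf_diff_eq False assms(4) by simp
  also have "\<dots> = measure M ({a<..b} \<inter> R)" by (rule residual_measure_measure[OF assms(1-3)]) simp
  finally show ?thesis by (simp add: Int_commute)
qed

lemma residual_cdf_mono:
  assumes "valuation M" "interval_union R" "R \<subseteq> {0..1}" "a \<le> b"
  shows "residual_cdf M R a \<le> residual_cdf M R b"
  using residual_cdf_diff[OF assms] measure_nonneg[of M "R \<inter> {a<..b}"] by linarith

lemma residual_cdf_0:
  assumes "valuation M" "interval_union R" "R \<subseteq> {0..1}" shows "residual_cdf M R 0 = 0"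
proof -
  interpret finite_borel_measure "residual_measure M R" by (rule residual_measure_finite_borel[OF assms])
  have "residual_cdf M R 0 = measure M ({..0} \<inter> R)"
    unfolding residual_cdf_def cdf_def by (rule residual_measure_measure[OF assms]) simp
  also have "\<dots> = 0"
  proof (rule valuation_finite_null[OF assms(1)])
    show "finite ({..0} \<inter> R)" by (rule finite_subset[of _ "{0::real}"]) (use assms(3) in auto)
  qed
  finally show ?thesis .
qed

text \<open>A point x of the cube of dimension n - 1 encodes cut points (made monotone by taking
  running maxima). For 0 < e \<le> 1 each player spreads a unit of demand over the cells it
  values within factor 1 - e of its best cell; the map update e enlarges cells that are
  under-demanded. Brouwer's theorem provides a fixed point, where every cell is demanded exactly
  once; Hall's theorem turns this into an assignment of cells that are almost best, and letting
  e \<rightarrow> 0 along a subsequence gives exactly best cells.\<close>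

locale cdf_family =
  fixes n :: nat and F :: "nat \<Rightarrow> real \<Rightarrow> real"
  assumes n_pos: "n \<ge> 1"
    and F_cont: "\<And>i t. i \<in> {1..n} \<Longrightarrow> isCont (F i) t"
    and F_mono: "\<And>i s t. i \<in> {1..n} \<Longrightarrow> 0 \<le> s \<Longrightarrow> s \<le> t \<Longrightarrow> t \<le> 1 \<Longrightarrow> F i s \<le> F i t"
    and F_0: "\<And>i. i \<in> {1..n} \<Longrightarrow> F i 0 = 0"
begin

fun cuts :: "(nat \<Rightarrow> real) \<Rightarrow> nat \<Rightarrow> real" where
  "cuts x 0 = 0"
| "cuts x (Suc k) = (if Suc k \<ge> n then 1 else max (cuts x k) (x k))"

declare cuts.simps(2)[simp del]

definition len :: "(nat \<Rightarrow> real) \<Rightarrow> nat \<Rightarrow> real" where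
  "len x k = cuts x (Suc k) - cuts x k"

definition val :: "nat \<Rightarrow> nat \<Rightarrow> (nat \<Rightarrow> real) \<Rightarrow> real" where
  "val i k x = F i (cuts x (Suc k)) - F i (cuts x k)"

fun best_upto :: "nat \<Rightarrow> nat \<Rightarrow> (nat \<Rightarrow> real) \<Rightarrow> real" where
  "best_upto i 0 x = val i 0 x"
| "best_upto i (Suc k) x = max (best_upto i k x) (val i (Suc k) x)"

definition best :: "nat \<Rightarrow> (nat \<Rightarrow> real) \<Rightarrow> real" where
  "best i x = best_upto i (n - 1) x"

definition total :: "nat \<Rightarrow> real" where
  "total i = F i 1"

text \<open>Demands: player i distributes one unit over the cells whose value exceeds
  (1 - e) * best i x, in proportion to the excess (a player valuing nothing at all demands
  cells in proportion to their length).\<close>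

definition excess :: "real \<Rightarrow> nat \<Rightarrow> nat \<Rightarrow> (nat \<Rightarrow> real) \<Rightarrow> real" where
  "excess e i k x = max 0 (val i k x - (1 - e) * best i x)"

definition excess_sum :: "real \<Rightarrow> nat \<Rightarrow> (nat \<Rightarrow> real) \<Rightarrow> real" where
  "excess_sum e i x = (\<Sum>l<n. excess e i l x)"

definition demand :: "real \<Rightarrow> nat \<Rightarrow> nat \<Rightarrow> (nat \<Rightarrow> real) \<Rightarrow> real" where
  "demand e i k x = (if total i > 0 then excess e i k x / excess_sum e i x else len x k)"

definition total_demand :: "real \<Rightarrow> nat \<Rightarrow> (nat \<Rightarrow> real) \<Rightarrow> real" where
  "total_demand e k x = (\<Sum>i\<in>{1..n}. demand e i k x)"

definition slack :: "real \<Rightarrow> nat \<Rightarrow> (nat \<Rightarrow> real) \<Rightarrow> real" where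
  "slack e k x = max 0 (1 - total_demand e k x)"

definition slack_sum :: "real \<Rightarrow> (nat \<Rightarrow> real) \<Rightarrow> real" where
  "slack_sum e x = (\<Sum>k<n. slack e k x)"

definition new_len :: "real \<Rightarrow> nat \<Rightarrow> (nat \<Rightarrow> real) \<Rightarrow> real" where
  "new_len e k x = (len x k + slack e k x) / (1 + slack_sum e x)"

definition update :: "real \<Rightarrow> (nat \<Rightarrow> real) \<Rightarrow> nat \<Rightarrow> real" where
  "update e x = (\<lambda>j. if j < n - 1 then (\<Sum>k\<le>j. new_len e k x) else 0)"

lemma cuts_n: "cuts x n = 1"
  using n_pos cuts.simps(2)[of x "n - 1"] by simp

lemma cuts_cube:
  assumes "x \<in> cube (n - 1)"
  shows "k \<le> n \<Longrightarrow> 0 \<le> cuts x k \<and> cuts x k \<le> 1"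
proof (induction k)
  case (Suc k)
  show ?case
  proof (cases "Suc k \<ge> n")
    case False
    then have "0 \<le> x k" "x k \<le> 1" using assms unfolding cube_def by auto
    then show ?thesis using Suc False by (simp add: cuts.simps(2))
  qed (simp add: cuts.simps(2))
qed simp

lemma cuts_mono:
  assumes "x \<in> cube (n - 1)" "k < n"
  shows "cuts x k \<le> cuts x (Suc k)"
  using cuts_cube[OF assms(1), of k] assms(2) by (simp add: cuts.simps(2))

lemma len_nonneg: "x \<in> cube (n - 1) \<Longrightarrow> k < n \<Longrightarrow> len x k \<ge> 0"
  using cuts_mono unfolding len_def by simp

lemma sum_len: "(\<Sum>k<n. len x k) = 1"
  unfolding len_def by (simp add: sum_lessThan_telescope cuts_n)

lemma total_nonneg: "i \<in> {1..n} \<Longrightarrow> total i \<ge> 0"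
  unfolding total_def using F_mono[of i 0 1] F_0[of i] by simp

lemma sum_val: "i \<in> {1..n} \<Longrightarrow> (\<Sum>k<n. val i k x) = total i"
  unfolding val_def total_def using sum_lessThan_telescope[of "\<lambda>k. F i (cuts x k)" n]
  by (simp add: cuts_n F_0)

lemma best_upto_ge: "k \<le> m \<Longrightarrow> val i k x \<le> best_upto i m x"
proof (induction m)
  case (Suc m) then show ?case by (cases "k = Suc m") (auto simp: le_Suc_eq max.coboundedI1)
qed simp

lemma best_upto_attained: "\<exists>k\<le>m. best_upto i m x = val i k x"
proof (induction m)
  case (Suc m)
  then obtain k where "k \<le> m" "best_upto i m x = val i k x" by blast
  then show ?case by (cases "best_upto i m x \<le> val i (Suc m) x") (auto simp: max_def intro: le_SucI)
qed simp

lemma best_ge: "k < n \<Longrightarrow> val i k x \<le> best i x"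
  unfolding best_def by (rule best_upto_ge) simp

lemma best_attained: "\<exists>k<n. best i x = val i k x"
proof -
  obtain k where "k \<le> n - 1" "best i x = val i k x" unfolding best_def using best_upto_attained by blast
  moreover have "k < n" using \<open>k \<le> n - 1\<close> n_pos by linarith
  ultimately show ?thesis by blast
qed

text \<open>A player who values the cake positively values its best cell positively, so its excesses do
  not all vanish and its demand is well defined.\<close>

lemma best_pos:
  assumes "i \<in> {1..n}" "total i > 0" shows "best i x > 0"
proof -
  have "total i = (\<Sum>k<n. val i k x)" using sum_val[OF assms(1)] by simp
  also have "\<dots> \<le> (\<Sum>k<n. best i x)" by (rule sum_mono) (simp add: best_ge)
  finally have "0 < real n * best i x" using assms(2) by simp
  then show ?thesis by (simp add: zero_less_mult_iff)
qed

lemma excess_nonneg: "excess e i k x \<ge> 0"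
  unfolding excess_def by simp

lemma excess_sum_pos:
  assumes "0 < e" "i \<in> {1..n}" "total i > 0" shows "excess_sum e i x > 0"
proof -
  obtain k where k: "k < n" "best i x = val i k x" using best_attained by blast
  have "0 < e * best i x" using assms best_pos by simp
  also have "\<dots> \<le> excess e i k x" unfolding excess_def using k(2) by (simp add: algebra_simps)
  also have "\<dots> \<le> excess_sum e i x" unfolding excess_sum_def
    by (rule member_le_sum) (use k(1) excess_nonneg in auto)
  finally show ?thesis .
qed

lemma cont_cuts: "continuous_on UNIV (\<lambda>x. cuts x k)"
proof (induction k)
  case (Suc k)
  have "continuous_on UNIV (\<lambda>x. max (cuts x k) (x k))"
    by (rule continuous_on_max[OF Suc continuous_on_product_coordinates])
  then show ?case by (cases "n \<le> Suc k") (simp_all add: cuts.simps(2))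
qed simp

lemma cont_len: "continuous_on UNIV (\<lambda>x. len x k)"
  unfolding len_def by (intro continuous_on_diff cont_cuts)

lemma cont_val: assumes "i \<in> {1..n}" shows "continuous_on UNIV (val i k)"
proof -
  have "continuous_on UNIV (F i)"
    by (rule continuous_at_imp_continuous_on) (simp add: F_cont[OF assms])
  then have "continuous_on UNIV (\<lambda>x. F i (cuts x j))" for j
    by (rule continuous_on_compose2[OF _ cont_cuts]) auto
  then show ?thesis unfolding val_def by (intro continuous_on_diff)
qed

lemma cont_best_upto: "i \<in> {1..n} \<Longrightarrow> continuous_on UNIV (best_upto i m)"
proof (induction m)
  case (Suc m)
  have "continuous_on UNIV (\<lambda>x. max (best_upto i m x) (val i (Suc m) x))"
    by (rule continuous_on_max[OF Suc.IH[OF Suc.prems] cont_val[OF Suc.prems]])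
  then show ?case by simp
qed (simp add: cont_val)

lemma cont_best: "i \<in> {1..n} \<Longrightarrow> continuous_on UNIV (best i)"
  unfolding best_def[abs_def] using cont_best_upto by simp

lemma cont_demand:
  assumes "0 < e" "i \<in> {1..n}" shows "continuous_on UNIV (demand e i k)"
proof (cases "total i > 0")
  case True
  have excess: "continuous_on UNIV (excess e i l)" for l
    unfolding excess_def[abs_def]
    by (intro continuous_on_max continuous_on_const continuous_on_diff continuous_on_mult
        cont_val[OF assms(2)] cont_best[OF assms(2)])
  have "continuous_on UNIV (\<lambda>x. excess e i k x / excess_sum e i x)"
    using excess_sum_pos[OF assms True] unfolding excess_sum_def
    by (intro continuous_on_divide continuous_on_sum excess) (metis less_irrefl)
  then show ?thesis using True unfolding demand_def[abs_def] by simp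
next
  case False
  then show ?thesis unfolding demand_def[abs_def] using cont_len by simp
qed

lemma slack_nonneg: "slack e k x \<ge> 0"
  unfolding slack_def by simp

lemma slack_sum_nonneg: "slack_sum e x \<ge> 0"
  unfolding slack_sum_def by (rule sum_nonneg) (simp add: slack_nonneg)

lemma cont_new_len:
  assumes "0 < e" shows "continuous_on UNIV (new_len e k)"
proof -
  have slack: "continuous_on UNIV (slack e l)" for l
    unfolding slack_def[abs_def] total_demand_def
    by (intro continuous_on_max continuous_on_const continuous_on_diff continuous_on_sum
        cont_demand[OF assms]) auto
  show ?thesis
    unfolding new_len_def[abs_def] slack_sum_def
    using slack_sum_nonneg unfolding slack_sum_def
    by (intro continuous_on_divide continuous_on_add continuous_on_sum continuous_on_const cont_len slack)
      (metis add_pos_nonneg less_numeral_extra(1,3))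
qed

lemma cont_update: assumes "0 < e" shows "continuous_on UNIV (update e)"
  unfolding update_def
proof (rule continuous_on_coordinatewise_then_product)
  fix j
  show "continuous_on UNIV (\<lambda>x. if j < n - 1 then \<Sum>k\<le>j. new_len e k x else 0)"
    by (cases "j < n - 1") (auto intro!: continuous_on_sum cont_new_len assms)
qed

lemma demand_nonneg: "x \<in> cube (n - 1) \<Longrightarrow> k < n \<Longrightarrow> demand e i k x \<ge> 0"
  unfolding demand_def excess_sum_def using len_nonneg excess_nonneg by (simp add: sum_nonneg)

lemma demand_sum: assumes "0 < e" "i \<in> {1..n}" shows "(\<Sum>k<n. demand e i k x) = 1"
proof (cases "total i > 0")
  case True
  have "(\<Sum>k<n. demand e i k x) = (\<Sum>k<n. excess e i k x) / excess_sum e i x"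
    unfolding demand_def using True by (simp add: sum_divide_distrib)
  also have "\<dots> = 1" unfolding excess_sum_def[symmetric] using excess_sum_pos[OF assms True, of x] by simp
  finally show ?thesis .
next
  case False then show ?thesis unfolding demand_def using sum_len by simp
qed

lemma sum_total_demand: assumes "0 < e" shows "(\<Sum>k<n. total_demand e k x) = real n"
proof -
  have "(\<Sum>k<n. total_demand e k x) = (\<Sum>i\<in>{1..n}. \<Sum>k<n. demand e i k x)"
    unfolding total_demand_def by (rule sum.swap)
  also have "\<dots> = (\<Sum>i\<in>{1..n}. 1)" by (rule sum.cong) (simp_all add: demand_sum assms)
  finally show ?thesis by simp
qed

lemma new_len_nonneg: "x \<in> cube (n - 1) \<Longrightarrow> k < n \<Longrightarrow> new_len e k x \<ge> 0"
  unfolding new_len_def using len_nonneg slack_nonneg slack_sum_nonneg by (simp add: add_nonneg_nonneg)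

lemma sum_new_len: "(\<Sum>k<n. new_len e k x) = 1"
proof -
  have "(\<Sum>k<n. new_len e k x) = (\<Sum>k<n. len x k + slack e k x) / (1 + slack_sum e x)"
    unfolding new_len_def by (simp add: sum_divide_distrib)
  also have "\<dots> = (1 + slack_sum e x) / (1 + slack_sum e x)" by (simp add: sum.distrib sum_len slack_sum_def)
  also have "\<dots> = 1" using slack_sum_nonneg[of e x] by simp
  finally show ?thesis .
qed

lemma update_cube: assumes "x \<in> cube (n - 1)" shows "update e x \<in> cube (n - 1)"
  unfolding cube_def
proof (intro CollectI conjI allI impI)
  fix j assume j: "j < n - 1"
  have "(\<Sum>k\<le>j. new_len e k x) \<ge> 0" by (rule sum_nonneg) (use new_len_nonneg[OF assms] j in auto)
  moreover have "(\<Sum>k\<le>j. new_len e k x) \<le> (\<Sum>k<n. new_len e k x)"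
    by (rule sum_mono2) (use new_len_nonneg[OF assms] j in auto)
  ultimately show "0 \<le> update e x j" "update e x j \<le> 1" using j sum_new_len unfolding update_def by auto
next
  fix j :: nat assume "n - 1 \<le> j" then show "update e x j = 0" unfolding update_def by simp
qed

text \<open>At a fixed point the cut points are the partial sums of the new lengths, so the lengths are
  unchanged: len = (len + slack) / (1 + slack_sum).\<close>

lemma fix_cuts:
  assumes x: "x \<in> cube (n - 1)" and fp: "update e x = x"
  shows "k \<le> n - 1 \<Longrightarrow> cuts x k = (\<Sum>l<k. new_len e l x)"
proof (induction k)
  case (Suc k)
  then have k: "k < n - 1" by simp
  have xk: "x k = (\<Sum>l\<le>k. new_len e l x)"
    using fun_cong[OF fp, of k] k unfolding update_def by simp
  have "new_len e k x \<ge> 0" using new_len_nonneg[OF x] k by simp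
  then have "max (\<Sum>l<k. new_len e l x) (\<Sum>l\<le>k. new_len e l x) = (\<Sum>l<Suc k. new_len e l x)"
    by (simp add: lessThan_Suc_atMost[symmetric])
  then show ?case using Suc k xk by (simp add: cuts.simps(2))
qed simp

lemma fix_len:
  assumes x: "x \<in> cube (n - 1)" and fp: "update e x = x" and k: "k < n"
  shows "len x k = new_len e k x"
proof (cases "Suc k \<le> n - 1")
  case True
  then show ?thesis unfolding len_def using fix_cuts[OF x fp] by simp
next
  case False
  then have kn: "k = n - 1" using k by simp
  have "cuts x k = (\<Sum>l<k. new_len e l x)" using fix_cuts[OF x fp] kn by simp
  moreover have "cuts x (Suc k) = 1" using kn n_pos cuts_n by simp
  moreover have "(\<Sum>l<Suc k. new_len e l x) = 1" using kn n_pos sum_new_len by simp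
  ultimately show ?thesis unfolding len_def by simp
qed

lemma fixpoint_slack:
  assumes x: "x \<in> cube (n - 1)" and fp: "update e x = x" and k: "k < n"
  shows "len x k * slack_sum e x = slack e k x"
proof -
  have "len x k = (len x k + slack e k x) / (1 + slack_sum e x)"
    using fix_len[OF x fp k] unfolding new_len_def .
  then have "len x k * (1 + slack_sum e x) = len x k + slack e k x"
    using slack_sum_nonneg[of e x] by (simp add: field_simps)
  then show ?thesis by (simp add: algebra_simps)
qed

lemma zero_len_total_demand:
  assumes e: "0 < e" "e \<le> 1" and x: "x \<in> cube (n - 1)" and k: "k < n" and len: "len x k = 0"
  shows "total_demand e k x = 0"
  unfolding total_demand_def
proof (rule sum.neutral, intro ballI)
  fix i assume i: "i \<in> {1..n}"
  show "demand e i k x = 0"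
  proof (cases "total i > 0")
    case True
    have "val i k x = 0" using len unfolding len_def val_def by simp
    moreover have "(1 - e) * best i x \<ge> 0" using best_pos[OF i True, of x] e by simp
    ultimately have "excess e i k x = 0" unfolding excess_def by simp
    then show ?thesis unfolding demand_def using True by simp
  next
    case False then show ?thesis unfolding demand_def using len by simp
  qed
qed

text \<open>At a fixed point there is no slack: otherwise every cell of positive length would carry
  slack, every cell would be under-demanded, and the total demand would fall short of n.\<close>

lemma fixpoint_no_slack:
  assumes e: "0 < e" "e \<le> 1" and x: "x \<in> cube (n - 1)" and fp: "update e x = x"
  shows "slack_sum e x = 0"
proof (rule ccontr)
  assume "slack_sum e x \<noteq> 0"
  then have pos: "slack_sum e x > 0" using slack_sum_nonneg[of e x] by simp
  have under: "total_demand e k x < 1" if k: "k < n" for k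
  proof (cases "len x k = 0")
    case True
    then show ?thesis using zero_len_total_demand[OF e x k True] by simp
  next
    case False
    then have "len x k > 0" using len_nonneg[OF x k] by simp
    then have "slack e k x > 0" using fixpoint_slack[OF x fp k] pos by (metis mult_pos_pos)
    then show ?thesis unfolding slack_def by simp
  qed
  have "(\<Sum>k<n. total_demand e k x) < (\<Sum>k<n. 1)"
    by (rule sum_strict_mono) (use n_pos under in \<open>auto simp: lessThan_empty_iff\<close>)
  then show False using sum_total_demand[OF e(1), of x] by simp
qed

lemma fixpoint_balanced:
  assumes e: "0 < e" "e \<le> 1" and x: "x \<in> cube (n - 1)" and fp: "update e x = x" and k: "k < n"
  shows "total_demand e k x = 1"
proof -
  have at_least: "total_demand e l x \<ge> 1" if "l < n" for l
  proof -
    have "slack e l x \<le> slack_sum e x"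
      unfolding slack_sum_def by (rule member_le_sum) (use that slack_nonneg in auto)
    then have "slack e l x = 0" using fixpoint_no_slack[OF e x fp] slack_nonneg[of e l x] by simp
    then show ?thesis unfolding slack_def by simp
  qed
  show ?thesis
  proof (rule ccontr)
    assume "total_demand e k x \<noteq> 1"
    then have "total_demand e k x > 1" using at_least[OF k] by simp
    then have "(\<Sum>l<n. 1) < (\<Sum>l<n. total_demand e l x)"
      by (intro sum_strict_mono_ex1) (use at_least k in auto)
    then show False using sum_total_demand[OF e(1), of x] by simp
  qed
qed

text \<open>Balanced demands satisfy Hall's condition: any m players put total demand m on the
  cells they demand, and each of these cells is demanded exactly once in total.\<close>

lemma balanced_demand_hall:
  assumes e: "0 < e" and x: "x \<in> cube (n - 1)" and balanced: "\<And>k. k < n \<Longrightarrow> total_demand e k x = 1"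
  shows "hall_condition {1..n} (\<lambda>i. {k. k < n \<and> demand e i k x > 0})"
  unfolding hall_condition_def
proof (intro conjI ballI allI impI)
  fix I assume I: "I \<subseteq> {1..n}"
  define K where "K = (\<Union>i\<in>I. {k. k < n \<and> demand e i k x > 0})"
  have K: "K \<subseteq> {..<n}" unfolding K_def by auto
  have "real (card I) = (\<Sum>i\<in>I. 1)" by simp
  also have "\<dots> = (\<Sum>i\<in>I. \<Sum>k<n. demand e i k x)"
    by (rule sum.cong) (use I demand_sum[OF e] in auto)
  also have "\<dots> = (\<Sum>i\<in>I. \<Sum>k\<in>K. demand e i k x)"
  proof (rule sum.cong[OF refl], rule sum.mono_neutral_right)
    fix i assume "i \<in> I"
    show "\<forall>k\<in>{..<n} - K. demand e i k x = 0"
    proof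
      fix k assume k: "k \<in> {..<n} - K"
      then have "\<not> 0 < demand e i k x" using \<open>i \<in> I\<close> unfolding K_def by auto
      then show "demand e i k x = 0" using demand_nonneg[OF x, of k e i] k by simp
    qed
  qed (use K in auto)
  also have "\<dots> = (\<Sum>k\<in>K. \<Sum>i\<in>I. demand e i k x)" by (rule sum.swap)
  also have "\<dots> \<le> (\<Sum>k\<in>K. total_demand e k x)"
    unfolding total_demand_def
    by (intro sum_mono sum_mono2) (use I K demand_nonneg[OF x] in auto)
  also have "\<dots> = (\<Sum>k\<in>K. 1)" by (rule sum.cong) (use K balanced in auto)
  also have "\<dots> = real (card K)" by simp
  finally show "card I \<le> card K" by simp
qed simp

lemma balanced_assignment:
  assumes e: "0 < e" and x: "x \<in> cube (n - 1)" and balanced: "\<And>k. k < n \<Longrightarrow> total_demand e k x = 1"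
  obtains \<pi> where "inj_on \<pi> {1..n}" "\<And>i. i \<in> {1..n} \<Longrightarrow> \<pi> i < n \<and> demand e i (\<pi> i) x > 0"
  using hall[OF _ balanced_demand_hall[OF e x balanced]] unfolding distinct_reps_def by auto

text \<open>A player that values the whole residual cake at 0 has a vanishing distribution function on
  [0,1]; then all its cells are worthless and any assignment is acceptable to it.\<close>

lemma null_player_cdf:
  assumes "x \<in> cube (n - 1)" "i \<in> {1..n}" "total i = 0" "k \<le> n"
  shows "F i (cuts x k) = 0"
proof -
  have "0 \<le> cuts x k" "cuts x k \<le> 1" using cuts_cube[OF assms(1,4)] by auto
  then have "F i 0 \<le> F i (cuts x k)" "F i (cuts x k) \<le> F i 1" using F_mono[OF assms(2)] by auto
  then show ?thesis using F_0[OF assms(2)] assms(3) unfolding total_def by simp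
qed

lemma approx_envy_free_cuts:
  assumes e: "0 < e" "e \<le> 1"
  shows "\<exists>x\<in>cube (n - 1). \<exists>\<pi>. inj_on \<pi> {1..n} \<and>
           (\<forall>i\<in>{1..n}. \<pi> i < n \<and> (1 - e) * best i x \<le> val i (\<pi> i) x)"
proof -
  obtain x where x: "x \<in> cube (n - 1)" "update e x = x"
    using brouwer_cube[OF continuous_on_subset[OF cont_update[OF e(1)]] update_cube] by blast
  obtain \<pi> where \<pi>: "inj_on \<pi> {1..n}" "\<And>i. i \<in> {1..n} \<Longrightarrow> \<pi> i < n \<and> demand e i (\<pi> i) x > 0"
    using balanced_assignment[OF e(1) x(1) fixpoint_balanced[OF e x]] by blast
  have "(1 - e) * best i x \<le> val i (\<pi> i) x" if i: "i \<in> {1..n}" for i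
  proof (cases "total i > 0")
    case True
    then have "excess e i (\<pi> i) x / excess_sum e i x > 0" using \<pi>(2)[OF i] unfolding demand_def by simp
    then have "excess e i (\<pi> i) x > 0"
      using excess_sum_pos[OF e(1) i True, of x] by (simp add: zero_less_divide_iff)
    then show ?thesis unfolding excess_def by simp
  next
    case False
    then have "total i = 0" using total_nonneg[OF i] by simp
    then have "val i k x = 0" if "k < n" for k
      unfolding val_def using null_player_cdf[OF x(1) i] that by simp
    then show ?thesis using best_attained[of i x] \<pi>(2)[OF i] by auto
  qed
  then show ?thesis using x(1) \<pi> by blast
qed

text \<open>Letting e = 1/(m+1) \<rightarrow> 0: some assignment recurs infinitely often, and along a
  subsequence the cut points converge; in the limit the assigned cells are best cells.\<close>

lemma exact_envy_free_cuts:
  "\<exists>x\<in>cube (n - 1). \<exists>\<pi>. inj_on \<pi> {1..n} \<and> (\<forall>i\<in>{1..n}. \<pi> i < n \<and> best i x \<le> val i (\<pi> i) x)"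
proof -
  define e where "e m = inverse (real (Suc m))" for m
  have e: "0 < e m" "e m \<le> 1" for m unfolding e_def by (auto simp: inverse_le_1_iff)
  obtain X P where X: "\<And>m. X m \<in> cube (n - 1)" and P: "\<And>m. inj_on (P m) {1..n}"
    "\<And>m i. i \<in> {1..n} \<Longrightarrow> P m i < n"
    "\<And>m i. i \<in> {1..n} \<Longrightarrow> (1 - e m) * best i (X m) \<le> val i (P m i) (X m)"
  proof -
    have "\<forall>m. \<exists>x\<in>cube (n - 1). \<exists>\<pi>. inj_on \<pi> {1..n} \<and>
            (\<forall>i\<in>{1..n}. \<pi> i < n \<and> (1 - e m) * best i x \<le> val i (\<pi> i) x)"
      using approx_envy_free_cuts[OF e] by blast
    then show thesis using that by metis
  qed
  have "range (\<lambda>m. restrict (P m) {1..n}) \<subseteq> PiE {1..n} (\<lambda>_. {..<n})" using P(2) by auto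
  then have "finite (range (\<lambda>m. restrict (P m) {1..n}))"
    by (rule finite_subset) (simp add: finite_PiE)
  from cube_subseq_constant_label[of X "n - 1", OF X this]
  obtain l r where l: "l \<in> cube (n - 1)" and r: "strict_mono r"
    and same: "\<And>j. restrict (P (r j)) {1..n} = restrict (P (r 0)) {1..n}"
    and lim: "(\<lambda>j. X (r j)) \<longlonglongrightarrow> l" by blast
  define \<pi> where "\<pi> = P (r 0)"
  have P_r: "P (r j) i = \<pi> i" if "i \<in> {1..n}" for i j
    using fun_cong[OF same[of j], of i] that unfolding \<pi>_def by simp
  have e_lim: "(\<lambda>j. e (r j)) \<longlonglongrightarrow> 0"
    unfolding e_def by (rule LIMSEQ_subseq_LIMSEQ[OF LIMSEQ_inverse_real_of_nat r, unfolded o_def])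
  have "best i l \<le> val i (\<pi> i) l" if i: "i \<in> {1..n}" for i
  proof (rule LIMSEQ_le)
    have cont_b: "isCont (best i) l" and cont_v: "isCont (val i (\<pi> i)) l"
      using cont_best[OF i] cont_val[OF i] by (simp_all add: continuous_on_eq_continuous_at)
    have "(\<lambda>j. (1 - e (r j)) * best i (X (r j))) \<longlonglongrightarrow> (1 - 0) * best i l"
      by (intro tendsto_mult tendsto_diff tendsto_const e_lim isCont_tendsto_compose[OF cont_b lim])
    then show "(\<lambda>j. (1 - e (r j)) * best i (X (r j))) \<longlonglongrightarrow> best i l" by simp
    show "(\<lambda>j. val i (\<pi> i) (X (r j))) \<longlonglongrightarrow> val i (\<pi> i) l"
      by (rule isCont_tendsto_compose[OF cont_v lim])
    show "\<exists>N. \<forall>j\<ge>N. (1 - e (r j)) * best i (X (r j)) \<le> val i (\<pi> i) (X (r j))"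
      using P(3)[OF i] P_r[OF i] by metis
  qed
  moreover have "inj_on \<pi> {1..n}" "\<forall>i\<in>{1..n}. \<pi> i < n" unfolding \<pi>_def using P by auto
  ultimately show ?thesis using l by blast
qed

lemma envy_free_cuts:
  obtains a \<pi> where "a 0 = 0" "a n = 1" "\<And>k. k < n \<Longrightarrow> a k \<le> a (Suc k)"
    "bij_betw \<pi> {1..n} {..<n}"
    "\<And>i k. i \<in> {1..n} \<Longrightarrow> k < n \<Longrightarrow>
       F i (a (Suc k)) - F i (a k) \<le> F i (a (Suc (\<pi> i))) - F i (a (\<pi> i))"
proof -
  obtain x \<pi> where x: "x \<in> cube (n - 1)" and \<pi>: "inj_on \<pi> {1..n}"
    and ef: "\<forall>i\<in>{1..n}. \<pi> i < n \<and> best i x \<le> val i (\<pi> i) x"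
    using exact_envy_free_cuts by blast
  have "\<pi> ` {1..n} = {..<n}"
  proof (rule card_subset_eq)
    show "\<pi> ` {1..n} \<subseteq> {..<n}" using ef by auto
    show "card (\<pi> ` {1..n}) = card {..<n}" using card_image[OF \<pi>] by simp
  qed simp
  then have "bij_betw \<pi> {1..n} {..<n}" unfolding bij_betw_def using \<pi> by simp
  moreover have "val i k x \<le> val i (\<pi> i) x" if "i \<in> {1..n}" "k < n" for i k
    using best_ge[OF that(2), of i x] ef that(1) by fastforce
  ultimately show thesis
    using that[of "cuts x" \<pi>] cuts_n cuts_mono[OF x] unfolding val_def by simp
qed

end

lemma division_pieces:
  "division n Y \<Longrightarrow> i \<in> {1..n} \<Longrightarrow> interval_union (Y i) \<and> Y i \<subseteq> {0..1}"
  unfolding division_def finite_union_intervals_iff by auto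

lemma division_residual:
  assumes "division n Y" shows "interval_union ({0..1} - (\<Union>i\<in>{1..n}. Y i))"
proof -
  have "interval_union (\<Union>i\<in>{1..n}. Y i)"
    by (rule interval_union_UN) (use division_pieces[OF assms] in auto)
  then show ?thesis by (rule interval_union_diff[OF interval_union_interval[OF is_interval_cc]]) simp
qed

lemma residual_cdf_family:
  assumes n: "n \<ge> 1" and val: "\<forall>i\<in>{1..n}. valuation (v i)"
    and R: "interval_union R" "R \<subseteq> {0..1}"
  shows "cdf_family n (\<lambda>i. residual_cdf (v i) R)"
proof
  show "isCont (residual_cdf (v i) R) t" if "i \<in> {1..n}" for i t
    using residual_cdf_cont[OF _ R] val that by blast
  show "residual_cdf (v i) R s \<le> residual_cdf (v i) R t"
    if "i \<in> {1..n}" "0 \<le> s" "s \<le> t" "t \<le> 1" for i s t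
    using residual_cdf_mono[OF _ R] val that by blast
  show "residual_cdf (v i) R 0 = 0" if "i \<in> {1..n}" for i
    using residual_cdf_0[OF _ R] val that by blast
qed (rule n)

lemma valuation_disjoint_Un:
  assumes "valuation M" "interval_union A" "interval_union B" "A \<subseteq> {0..1}" "B \<subseteq> {0..1}"
    and "A \<inter> B = {}"
  shows "measure M (A \<union> B) = measure M A + measure M B"
proof -
  interpret prob_space M using valuation_prob[OF assms(1)] .
  show ?thesis using assms by (intro finite_measure_Union interval_union_sets) auto
qed

lemma cut_cells_disjoint:
  fixes a :: "nat \<Rightarrow> real"
  assumes mono: "\<And>k. k < n \<Longrightarrow> a k \<le> a (Suc k)" and "k \<noteq> l" "k < n" "l < n"
  shows "{a k<..a (Suc k)} \<inter> {a l<..a (Suc l)} = {}"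
proof -
  have ordered: "{a k<..a (Suc k)} \<inter> {a l<..a (Suc l)} = {}" if "k < l" "l < n" for k l
  proof -
    have "a (Suc k) \<le> a l"
      by (rule lift_Suc_mono_le_ivl[of "{..<n}"]) (use mono that in auto)
    then show ?thesis by auto
  qed
  show ?thesis
    using ordered[of k l] ordered[of l k] assms(2-4) by (cases "k < l") (auto simp: Int_commute)
qed

lemma cut_cells_cover:
  fixes a :: "nat \<Rightarrow> real"
  shows "a 0 < t \<Longrightarrow> t \<le> a m \<Longrightarrow> \<exists>k<m. t \<in> {a k<..a (Suc k)}"
proof (induction m)
  case (Suc m)
  then show ?case by (cases "t \<le> a m") (auto intro: less_SucI)
qed simp

lemma cells_cover:
  fixes a :: "nat \<Rightarrow> real"
  assumes a: "a 0 = 0" "a n = 1" and \<pi>: "bij_betw \<pi> {1..n} {..<n}"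
  shows "{0..1} - (\<Union>i\<in>{1..n}. Y i \<union> (({0..1} - (\<Union>i\<in>{1..n}. Y i)) \<inter> {a (\<pi> i)<..a (Suc (\<pi> i))}))
    \<subseteq> {0}"
proof
  fix t assume t: "t \<in> {0..1} - (\<Union>i\<in>{1..n}. Y i \<union> (({0..1} - (\<Union>i\<in>{1..n}. Y i)) \<inter> {a (\<pi> i)<..a (Suc (\<pi> i))}))"
  show "t \<in> {0}"
  proof (rule ccontr)
    assume "t \<notin> {0}"
    then obtain k where k: "k < n" "t \<in> {a k<..a (Suc k)}"
      using cut_cells_cover[of a t n] t a by auto
    then obtain i where i: "i \<in> {1..n}" "\<pi> i = k"
      using \<pi> unfolding bij_betw_def by (metis imageE lessThan_iff)
    then show False using t k by blast
  qed
qed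

lemma cells_complete_division:
  fixes a :: "nat \<Rightarrow> real"
  assumes divY: "division n Y" and R: "R = {0..1} - (\<Union>i\<in>{1..n}. Y i)"
    and a: "a 0 = 0" "a n = 1" "\<And>k. k < n \<Longrightarrow> a k \<le> a (Suc k)"
    and \<pi>: "bij_betw \<pi> {1..n} {..<n}"
  shows "complete_div n (\<lambda>i. Y i \<union> (R \<inter> {a (\<pi> i)<..a (Suc (\<pi> i))}))"
    (is "complete_div n ?X")
proof -
  have \<pi>_lt: "\<pi> i < n" if "i \<in> {1..n}" for i using \<pi> that unfolding bij_betw_def by auto
  have "finite_union_intervals (?X i)" if "i \<in> {1..n}" for i
  proof -
    have "interval_union (R \<inter> {a (\<pi> i)<..a (Suc (\<pi> i))})"
      using division_residual[OF divY] unfolding R[symmetric]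
      by (rule interval_union_Int[OF _ interval_union_interval]) (simp add: is_interval_1)
    then show ?thesis unfolding finite_union_intervals_iff
      using division_pieces[OF divY that] R by (auto intro: interval_union_Un)
  qed
  moreover have "?X i \<inter> ?X j = {}" if ij: "i \<in> {1..n}" "j \<in> {1..n}" "i \<noteq> j" for i j
  proof -
    have "\<pi> i \<noteq> \<pi> j" using \<pi> ij unfolding bij_betw_def inj_on_def by blast
    then have "{a (\<pi> i)<..a (Suc (\<pi> i))} \<inter> {a (\<pi> j)<..a (Suc (\<pi> j))} = {}"
      using cut_cells_disjoint[of n a, OF a(3)] \<pi>_lt ij by blast
    moreover have "Y i \<inter> Y j = {}" using divY ij unfolding division_def by blast
    ultimately show ?thesis unfolding R using ij by blast
  qed
  moreover have "{0..1} - (\<Union>i\<in>{1..n}. ?X i) \<subseteq> {0}"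
    unfolding R by (rule cells_cover[OF a(1,2) \<pi>])
  then have "finite ({0..1} - (\<Union>i\<in>{1..n}. ?X i))" by (rule finite_subset) simp
  ultimately show ?thesis unfolding complete_div_def division_def by blast
qed

text \<open>The residual cake is cut into
  envy-free cells, and each player adds its cell to its piece; since cells and old pieces are
  disjoint, values add up, and both kinds of comparisons are envy-free.\<close>

lemma extend_envy_free:
  assumes n: "n \<ge> 1" and val: "\<forall>i\<in>{1..n}. valuation (v i)"
    and divY: "division n Y" and efY: "envy_free n v Y"
  obtains X where "complete_div n X" "envy_free n v X"
    "\<And>i. i \<in> {1..n} \<Longrightarrow> util v Y i i \<le> util v X i i"
proof -
  define R where "R = {0..1} - (\<Union>i\<in>{1..n}. Y i)"
  have R: "interval_union R" "R \<subseteq> {0..1}" using division_residual[OF divY] unfolding R_def by auto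
  define F where "F i = residual_cdf (v i) R" for i
  interpret cdf_family n F
    unfolding F_def by (rule residual_cdf_family[OF n val R])
  obtain a \<pi> where a: "a 0 = 0" "a n = 1" "\<And>k. k < n \<Longrightarrow> a k \<le> a (Suc k)"
    and \<pi>: "bij_betw \<pi> {1..n} {..<n}"
    and ef: "\<And>i k. i \<in> {1..n} \<Longrightarrow> k < n \<Longrightarrow>
               F i (a (Suc k)) - F i (a k) \<le> F i (a (Suc (\<pi> i))) - F i (a (\<pi> i))"
    using envy_free_cuts by blast
  have \<pi>_lt: "\<pi> i < n" if "i \<in> {1..n}" for i using \<pi> that unfolding bij_betw_def by auto
  define Z where "Z i = R \<inter> {a (\<pi> i)<..a (Suc (\<pi> i))}" for i
  define X where "X i = Y i \<union> Z i" for i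
  have complete: "complete_div n X"
    unfolding X_def Z_def by (rule cells_complete_division[OF divY R_def a \<pi>])
  have Z_val: "measure (v j) (Z i) = F j (a (Suc (\<pi> i))) - F j (a (\<pi> i))"
    if "j \<in> {1..n}" "i \<in> {1..n}" for i j
    unfolding Z_def F_def using residual_cdf_diff[OF _ R, of "v j"] val that a(3) \<pi>_lt by auto
  have X_val: "util v X j i = util v Y j i + measure (v j) (Z i)"
    if "j \<in> {1..n}" "i \<in> {1..n}" for i j
    unfolding util_def X_def
  proof (rule valuation_disjoint_Un)
    show "interval_union (Z i)" unfolding Z_def
      by (rule interval_union_Int[OF R(1) interval_union_interval]) (simp add: is_interval_1)
    show "Y i \<inter> Z i = {}" using that(2) unfolding Z_def R_def by blast
  qed (use val that division_pieces[OF divY that(2)] R(2) in \<open>auto simp: Z_def\<close>)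
  have "envy_free n v X" unfolding envy_free_def
  proof (intro ballI)
    fix j i assume j: "j \<in> {1..n}" and i: "i \<in> {1..n}"
    have "util v Y j i \<le> util v Y j j" using efY i j unfolding envy_free_def by blast
    moreover have "measure (v j) (Z i) \<le> measure (v j) (Z j)"
      using ef[OF j \<pi>_lt[OF i]] Z_val[OF j i] Z_val[OF j j] by simp
    ultimately show "util v X j i \<le> util v X j j" using X_val[OF j i] X_val[OF j j] by simp
  qed
  moreover have "util v Y i i \<le> util v X i i" if "i \<in> {1..n}" for i
    using X_val[OF that that] measure_nonneg[of "v i" "Z i"] by simp
  ultimately show thesis using that complete by blast
qed

text \<open>A complete division distributes the whole value 1 of the cake (the finitely many uncovered
  points are null); hence envy-freeness forces proportionality, so every player gets at least
  1/n and both welfare functions are positive on envy-free complete divisions.\<close>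

lemma complete_division_value:
  assumes M: "valuation M" and compl: "complete_div n X"
  shows "(\<Sum>j\<in>{1..n}. measure M (X j)) = 1"
proof -
  interpret prob_space M using valuation_prob[OF M] .
  have divX: "division n X" using compl unfolding complete_div_def by simp
  define W where "W = (\<Union>j\<in>{1..n}. X j)"
  define C where "C = {0..1} - W"
  have finC: "finite C" using compl unfolding complete_div_def C_def W_def by simp
  have W_sub: "W \<subseteq> {0..1}" unfolding W_def using division_pieces[OF divX] by blast
  have C_sets: "C \<in> events" using interval_union_sets[OF M interval_union_finite[OF finC]] unfolding C_def by auto
  have cake: "{0..1::real} \<in> events" using interval_union_sets[OF M interval_union_interval[OF is_interval_cc]] by simp
  have "(\<Sum>j\<in>{1..n}. measure M (X j)) = measure M W"
    unfolding W_def
  proof (rule finite_measure_finite_Union[symmetric])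
    show "X ` {1..n} \<subseteq> events" using interval_union_sets[OF M] division_pieces[OF divX] by blast
    show "disjoint_family_on X {1..n}" using divX unfolding division_def disjoint_family_on_def by blast
  qed simp
  also have "\<dots> = measure M {0..1} - measure M C"
    using finite_measure_Diff[OF cake C_sets] W_sub unfolding C_def by (simp add: double_diff)
  also have "\<dots> = 1" using prob_space valuation_space[OF M] valuation_finite_null[OF M finC] by simp
  finally show ?thesis .
qed

lemma envy_free_complete_proportional:
  assumes n: "n \<ge> 1" and val: "\<forall>i\<in>{1..n}. valuation (v i)"
    and compl: "complete_div n X" and ef: "envy_free n v X" and i: "i \<in> {1..n}"
  shows "1 / real n \<le> util v X i i"
proof -
  have "1 = (\<Sum>j\<in>{1..n}. measure (v i) (X j))"
    using complete_division_value[OF _ compl] val i by simp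
  also have "\<dots> \<le> (\<Sum>j\<in>{1..n}. util v X i i)"
    by (rule sum_mono) (use ef i in \<open>auto simp: envy_free_def util_def\<close>)
  finally show ?thesis using n by (simp add: field_simps)
qed

lemma utilitarian_mono:
  "\<forall>i\<in>{1..n}. util v Y i i \<le> util v X i i \<Longrightarrow> utilitarian n v Y \<le> utilitarian n v X"
  unfolding utilitarian_def by (rule sum_mono) blast

lemma utilitarian_pos:
  assumes "n \<ge> 1" "\<forall>i\<in>{1..n}. 1 / real n \<le> util v X i i"
  shows "0 < utilitarian n v X"
proof -
  have "0 < (\<Sum>i\<in>{1..n}. 1 / real n)" using assms(1) by simp
  also have "\<dots> \<le> utilitarian n v X" unfolding utilitarian_def using assms(2) by (intro sum_mono) blast
  finally show ?thesis .
qed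

lemma egalitarian_attained:
  assumes "n \<ge> 1"
  shows "\<exists>i\<in>{1..n}. egalitarian n v X = util v X i i"
proof -
  have "egalitarian n v X \<in> (\<lambda>i. util v X i i) ` {1..n}"
    unfolding egalitarian_def using assms by (intro Min_in) auto
  then show ?thesis by auto
qed

lemma egalitarian_mono:
  assumes "n \<ge> 1" "\<forall>i\<in>{1..n}. util v Y i i \<le> util v X i i"
  shows "egalitarian n v Y \<le> egalitarian n v X"
proof -
  obtain i where i: "i \<in> {1..n}" "egalitarian n v X = util v X i i"
    using egalitarian_attained[OF assms(1)] by blast
  have "egalitarian n v Y \<le> util v Y i i" unfolding egalitarian_def using i(1) by simp
  also have "\<dots> \<le> egalitarian n v X" using assms(2) i by simp
  finally show ?thesis .
qed

lemma egalitarian_pos: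
  assumes "n \<ge> 1" "\<forall>i\<in>{1..n}. 1 / real n \<le> util v X i i"
  shows "0 < egalitarian n v X"
proof -
  obtain i where i: "i \<in> {1..n}" "egalitarian n v X = util v X i i"
    using egalitarian_attained[OF assms(1)] by blast
  have "0 < 1 / real n" using assms(1) by simp
  moreover have "1 / real n \<le> util v X i i" using assms(2) i(1) by blast
  ultimately show ?thesis using i(2) by linarith
qed

lemma envy_free_improvement:
  assumes n: "n \<ge> 1" and val: "\<forall>i\<in>{1..n}. valuation (v i)"
    and Y: "partial_div n Y" "envy_free n v Y"
  shows "\<exists>X. complete_div n X \<and> envy_free n v X \<and>
    (\<forall>i\<in>{1..n}. util v Y i i \<le> util v X i i) \<and> (\<forall>i\<in>{1..n}. 1 / real n \<le> util v X i i)"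
proof -
  obtain X where X: "complete_div n X" "envy_free n v X" "\<And>i. i \<in> {1..n} \<Longrightarrow> util v Y i i \<le> util v X i i"
    using extend_envy_free[OF n val _ Y(2)] Y(1) unfolding partial_div_def by blast
  then show ?thesis using envy_free_complete_proportional[OF n val X(1,2)] by blast
qed

text \<open>For a welfare function that is monotone in the own utilities and positive on proportional
  divisions, such an improvement rules out any \<alpha>-dumping paradox with \<alpha> > 1: the paradox
  would give w Y \<ge> \<alpha> * w X > w X \<ge> w Y.\<close>

lemma no_dumping_paradox:
  assumes "1 < \<alpha>"
    and improve: "\<And>Y. partial_div n Y \<Longrightarrow> envy_free n v Y \<Longrightarrow>
      \<exists>X. complete_div n X \<and> envy_free n v X \<and>
        (\<forall>i\<in>{1..n}. util v Y i i \<le> util v X i i) \<and> (\<forall>i\<in>{1..n}. 1 / real n \<le> util v X i i)"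
    and mono: "\<And>Y X. \<forall>i\<in>{1..n}. util v Y i i \<le> util v X i i \<Longrightarrow> w n v Y \<le> w n v X"
    and pos: "\<And>X. \<forall>i\<in>{1..n}. 1 / real n \<le> util v X i i \<Longrightarrow> 0 < w n v X"
  shows "\<not> dumping_paradox n v w \<alpha>"
proof
  assume "dumping_paradox n v w \<alpha>"
  then obtain Y where Y: "partial_div n Y" "envy_free n v Y"
    and dump: "\<And>X. complete_div n X \<Longrightarrow> envy_free n v X \<Longrightarrow> \<alpha> * w n v X \<le> w n v Y"
    unfolding dumping_paradox_def by blast
  obtain X where X: "complete_div n X" "envy_free n v X"
    "\<forall>i\<in>{1..n}. util v Y i i \<le> util v X i i" "\<forall>i\<in>{1..n}. 1 / real n \<le> util v X i i"
    using improve[OF Y] by blast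
  have "w n v X < \<alpha> * w n v X" using pos[OF X(4)] \<open>1 < \<alpha>\<close> by simp
  then show False using dump[OF X(1,2)] mono[OF X(3)] by linarith
qed

theorem proposition1:
  fixes n :: nat and v :: "nat \<Rightarrow> real measure" and \<alpha> :: real
  assumes "n \<ge> 1"
    and "\<forall>i\<in>{1..n}. valuation (v i)"
    and "\<alpha> > 1"
  shows "\<not> dumping_paradox n v utilitarian \<alpha>
       \<and> \<not> dumping_paradox n v egalitarian \<alpha>
       \<and> \<not> (\<exists>Y. partial_div n Y \<and> envy_free n v Y \<and>
              (\<forall>X. complete_div n X \<and> envy_free n v X \<longrightarrow> pareto_dominates n v Y X))"
proof -
  note improve = envy_free_improvement[OF assms(1,2)]
  have "\<not> dumping_paradox n v utilitarian \<alpha>"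
    by (rule no_dumping_paradox[where w = utilitarian,
          OF assms(3) improve utilitarian_mono utilitarian_pos[OF assms(1)]])
  moreover have "\<not> dumping_paradox n v egalitarian \<alpha>"
    by (rule no_dumping_paradox[where w = egalitarian,
          OF assms(3) improve egalitarian_mono[OF assms(1)] egalitarian_pos[OF assms(1)]])
  moreover have "\<not> pareto_dominates n v Y X" if "\<forall>i\<in>{1..n}. util v Y i i \<le> util v X i i" for X Y
    using that unfolding pareto_dominates_def by fastforce
  ultimately show ?thesis using improve by blast
qed

end
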